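(* Let $n\ge2$ and let $T=(n;\sigma,\delta,\sigma)$ with $\sigma,\delta\in\mathbb{R}$, $\sigma\ne0$. Then the eigenvalues $\lambda_h=\delta+2\sigma\cos\frac{h\pi}{n+1}$ have $\mathcal S_{\mathcal T}$-structured condition numbers \[ \kappa_{\mathcal S_{\mathcal T}}(\lambda_h)=\sqrt{\frac1n+\frac2{n-1}\cos^2\frac{h\pi}{n+1}},\qquad h=1,\dots,n. \]
   Context: $(n;\sigma,\delta,\tau)$ is the $n\times n$ tridiagonal Toeplitz matrix with diagonal $\delta$, superdiagonal $\tau$, subdiagonal $\sigma$. For $T=(n;\sigma,\delta,\sigma)$ real, the unit vector $\widetilde x_h$ proportional to $(\sin\frac{hk\pi}{n+1})_{k=1}^n$ is a right and left eigenvector for $\lambda_h$, $\kappa(\lambda_h)=1$, and $W_h=\widetilde x_h\widetilde x_h^H$. $\mathcal S_{\mathcal T}$ denotes the real subspace of real symmetric $n\times n$ tridiagonal Toeplitz matrices; $W_h|_{\mathcal S_{\mathcal T}}$ is the orthogonal projection of $W_h$ onto $\mathcal S_{\mathcal T}$ with respect to the (real) Frobenius inner product $\mathrm{Re}\,\mathrm{tr}(A^HB)$, and $\kappa_{\mathcal S_{\mathcal T}}(\lambda_h)=\kappa(\lambda_h)\|W_h|_{\mathcal S_{\mathcal T}}\|_F$. *)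

theory Defs
  imports Complex_Main
begin

text \<open>n x n real matrices are represented as functions nat => nat => real,
  with entries indexed by 0..n-1 (entry (i,j) is row i+1, column j+1 of the paper);
  vectors of length n as nat => real indexed by 0..n-1.\<close>

definition tridiag_toeplitz :: "nat \<Rightarrow> real \<Rightarrow> real \<Rightarrow> real \<Rightarrow> (nat \<Rightarrow> nat \<Rightarrow> real)" where
  "tridiag_toeplitz n \<sigma> \<delta> \<tau> = (\<lambda>i j.
     if i < n \<and> j < n then
       (if i = j then \<delta> else if j = i + 1 then \<tau> else if i = j + 1 then \<sigma> else 0)
     else 0)"

definition sym_tridiag_toeplitz_space :: "nat \<Rightarrow> (nat \<Rightarrow> nat \<Rightarrow> real) set" where
  "sym_tridiag_toeplitz_space n = {tridiag_toeplitz n s d s | s d. True}"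

definition frob_inner :: "nat \<Rightarrow> (nat \<Rightarrow> nat \<Rightarrow> real) \<Rightarrow> (nat \<Rightarrow> nat \<Rightarrow> real) \<Rightarrow> real" where
  "frob_inner n A B = (\<Sum>i<n. \<Sum>j<n. A i j * B i j)"

definition frob_norm :: "nat \<Rightarrow> (nat \<Rightarrow> nat \<Rightarrow> real) \<Rightarrow> real" where
  "frob_norm n A = sqrt (frob_inner n A A)"

definition orth_proj :: "nat \<Rightarrow> (nat \<Rightarrow> nat \<Rightarrow> real) set \<Rightarrow> (nat \<Rightarrow> nat \<Rightarrow> real) \<Rightarrow> (nat \<Rightarrow> nat \<Rightarrow> real)" where
  "orth_proj n S W = (THE P. P \<in> S \<and> (\<forall>Y\<in>S. frob_inner n (\<lambda>i j. W i j - P i j) Y = 0))"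

definition vnorm :: "nat \<Rightarrow> (nat \<Rightarrow> real) \<Rightarrow> real" where
  "vnorm n x = sqrt (\<Sum>k<n. x k ^ 2)"

definition vinner :: "nat \<Rightarrow> (nat \<Rightarrow> real) \<Rightarrow> (nat \<Rightarrow> real) \<Rightarrow> real" where
  "vinner n x y = (\<Sum>k<n. x k * y k)"

definition sin_eigvec :: "nat \<Rightarrow> nat \<Rightarrow> (nat \<Rightarrow> real)" where
  "sin_eigvec n h = (let v = (\<lambda>k. sin (real h * real (k + 1) * pi / real (n + 1)))
                     in (\<lambda>k. v k / vnorm n v))"

definition eig_cond :: "nat \<Rightarrow> (nat \<Rightarrow> real) \<Rightarrow> (nat \<Rightarrow> real) \<Rightarrow> real" where
  "eig_cond n x y = vnorm n x * vnorm n y / \<bar>vinner n y x\<bar>"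

definition outer :: "(nat \<Rightarrow> real) \<Rightarrow> (nat \<Rightarrow> nat \<Rightarrow> real)" where
  "outer x = (\<lambda>i j. x i * x j)"

definition struct_cond_ST :: "nat \<Rightarrow> nat \<Rightarrow> real" where
  "struct_cond_ST n h = (let x = sin_eigvec n h in
     eig_cond n x x * frob_norm n (orth_proj n (sym_tridiag_toeplitz_space n) (outer x)))"

definition mat_vec :: "nat \<Rightarrow> (nat \<Rightarrow> nat \<Rightarrow> real) \<Rightarrow> (nat \<Rightarrow> real) \<Rightarrow> (nat \<Rightarrow> real)" where
  "mat_vec n A x = (\<lambda>i. \<Sum>j<n. A i j * x j)"

end

theory Submission
  imports Defs
begin

(* The space of symmetric tridiagonal Toeplitz matrices is spanned by the identity I
   and the matrix E with ones on both off-diagonals; these are Frobenius-orthogonal, with squared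
   norms n and 2(n - 1). By the three-term recurrence
   sin((k - 1)t) + sin((k + 1)t) = 2 cos t sin(k t), vanishing at k = 0 and k = n + 1 for
   t = h pi/(n + 1), the normalised sine vector x is an eigenvector of E for 2 cos t, hence of
   every delta I + sigma E. So <x x^T, I> = 1 and <x x^T, E> = 2 cos t, the projection of x x^T is
   I/n + cos t/(n - 1) E, and its Frobenius norm is the claimed value; the unstructured
   condition number of the normal matrix is 1. *)

lemma frob_inner_commute: "frob_inner n A B = frob_inner n B A"
  by (simp add: frob_inner_def mult.commute)

lemma frob_inner_diff_left:
  "frob_inner n (\<lambda>i j. A i j - B i j) C = frob_inner n A C - frob_inner n B C"
  by (simp add: frob_inner_def sum_subtractf left_diff_distrib)

lemma frob_inner_self_eq_0D:
  assumes "frob_inner n A A = 0" and "\<And>i j. \<not> (i < n \<and> j < n) \<Longrightarrow> A i j = 0"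
  shows "A = (\<lambda>i j. 0)"
proof -
  have "\<forall>i\<in>{..<n}. \<forall>j\<in>{..<n}. A i j * A i j = 0"
    using assms(1) unfolding frob_inner_def
    by (simp add: sum_nonneg_eq_0_iff sum_nonneg)
  then show ?thesis
    using assms(2) by (auto simp: fun_eq_iff)
qed

lemma orth_proj_eqI:
  assumes "P \<in> S" and "\<And>Y. Y \<in> S \<Longrightarrow> frob_inner n (\<lambda>i j. W i j - P i j) Y = 0"
    and diff_closed: "\<And>A B. A \<in> S \<Longrightarrow> B \<in> S \<Longrightarrow> (\<lambda>i j. A i j - B i j) \<in> S"
    and definite: "\<And>A. A \<in> S \<Longrightarrow> frob_inner n A A = 0 \<Longrightarrow> A = (\<lambda>i j. 0)"
  shows "orth_proj n S W = P"
  unfolding orth_proj_def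
proof (rule the_equality)
  show "P \<in> S \<and> (\<forall>Y\<in>S. frob_inner n (\<lambda>i j. W i j - P i j) Y = 0)"
    using assms(1,2) by blast
next
  fix Q assume Q: "Q \<in> S \<and> (\<forall>Y\<in>S. frob_inner n (\<lambda>i j. W i j - Q i j) Y = 0)"
  define D where "D = (\<lambda>i j. P i j - Q i j)"
  have "D \<in> S" unfolding D_def using diff_closed assms(1) Q by blast
  have "D = (\<lambda>i j. (W i j - Q i j) - (W i j - P i j))" by (simp add: D_def)
  then have "frob_inner n D D = 0"
    using Q assms(2) \<open>D \<in> S\<close> by (simp add: frob_inner_diff_left)
  then have "D = (\<lambda>i j. 0)" using definite \<open>D \<in> S\<close> by blast
  then show "Q = P" by (auto simp: D_def fun_eq_iff)
qed

lemma frob_inner_outer: "frob_inner n (outer x) B = (\<Sum>i<n. x i * mat_vec n B x i)"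
  by (simp add: frob_inner_def outer_def mat_vec_def sum_distrib_left mult_ac)

lemma frob_inner_outer_eigenvector:
  assumes "\<And>i. i < n \<Longrightarrow> mat_vec n B x i = \<mu> * x i"
  shows "frob_inner n (outer x) B = \<mu> * (\<Sum>i<n. (x i)\<^sup>2)"
  unfolding frob_inner_outer sum_distrib_left
  by (intro sum.cong) (simp_all add: assms power2_eq_square)

lemma eig_cond_unit:
  assumes "(\<Sum>k<n. (x k)\<^sup>2) = 1"
  shows "eig_cond n x x = 1"
  using assms by (simp add: eig_cond_def vnorm_def vinner_def power2_eq_square)

lemma tridiag_toeplitz_diff:
  "(\<lambda>i j. tridiag_toeplitz n s d t i j - tridiag_toeplitz n s' d' t' i j)
     = tridiag_toeplitz n (s - s') (d - d') (t - t')"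
  by (auto simp: tridiag_toeplitz_def fun_eq_iff)

lemma tridiag_toeplitz_sym_decomp:
  "tridiag_toeplitz n s d s
     = (\<lambda>i j. d * tridiag_toeplitz n 0 1 0 i j + s * tridiag_toeplitz n 1 0 1 i j)"
  by (auto simp: tridiag_toeplitz_def fun_eq_iff)

lemma frob_inner_sym_tridiag_toeplitz_right:
  "frob_inner n A (tridiag_toeplitz n s d s)
     = d * frob_inner n A (tridiag_toeplitz n 0 1 0) + s * frob_inner n A (tridiag_toeplitz n 1 0 1)"
  by (subst tridiag_toeplitz_sym_decomp)
    (simp add: frob_inner_def sum_distrib_left sum.distrib algebra_simps)

lemma mat_vec_sym_tridiag_toeplitz:
  assumes "i < n"
  shows "mat_vec n (tridiag_toeplitz n s d s) y i
     = d * y i + s * (if Suc i < n then y (Suc i) else 0) + s * (if 0 < i then y (i - 1) else 0)"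
proof -
  have entry: "tridiag_toeplitz n s d s i j * y j
      = (if j = i then d * y j else 0) + (if j = Suc i then s * y j else 0)
        + (if Suc j = i then s * y j else 0)" if "j < n" for j
    using that assms by (auto simp: tridiag_toeplitz_def)
  have below: "(\<Sum>j<n. if Suc j = i then s * y j else 0) = s * (if 0 < i then y (i - 1) else 0)"
  proof (cases i)
    case (Suc k)
    then have "(\<Sum>j<n. if Suc j = i then s * y j else 0) = (\<Sum>j<n. if j = k then s * y j else 0)"
      by (intro sum.cong) auto
    then show ?thesis using Suc assms by simp
  qed simp
  have "mat_vec n (tridiag_toeplitz n s d s) y i
      = (\<Sum>j<n. (if j = i then d * y j else 0) + (if j = Suc i then s * y j else 0)
          + (if Suc j = i then s * y j else 0))"
    unfolding mat_vec_def by (rule sum.cong) (simp_all add: entry)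
  then show ?thesis using assms by (simp add: sum.distrib below)
qed

lemma frob_inner_identity_identity:
  "frob_inner n (tridiag_toeplitz n 0 1 0) (tridiag_toeplitz n 0 1 0) = real n"
proof -
  \<comment> \<open>Squaring 0/1 entries changes nothing, so this is the sum of the row sums.\<close>
  have "frob_inner n (tridiag_toeplitz n 0 1 0) (tridiag_toeplitz n 0 1 0)
      = frob_inner n (outer (\<lambda>_. 1)) (tridiag_toeplitz n 0 1 0)"
    unfolding frob_inner_def outer_def by (intro sum.cong refl) (auto simp: tridiag_toeplitz_def)
  also have "\<dots> = (\<Sum>i<n. 1)"
    unfolding frob_inner_outer by (intro sum.cong refl) (simp add: mat_vec_sym_tridiag_toeplitz)
  finally show ?thesis by simp
qed

lemma frob_inner_identity_offdiag:
  "frob_inner n (tridiag_toeplitz n 0 1 0) (tridiag_toeplitz n 1 0 1) = 0"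
  unfolding frob_inner_def by (intro sum.neutral ballI) (auto simp: tridiag_toeplitz_def)

lemma frob_inner_offdiag_offdiag:
  "frob_inner n (tridiag_toeplitz n 1 0 1) (tridiag_toeplitz n 1 0 1) = 2 * real (n - 1)"
proof -
  have "frob_inner n (tridiag_toeplitz n 1 0 1) (tridiag_toeplitz n 1 0 1)
      = frob_inner n (outer (\<lambda>_. 1)) (tridiag_toeplitz n 1 0 1)"
    unfolding frob_inner_def outer_def by (intro sum.cong refl) (auto simp: tridiag_toeplitz_def)
  also have "\<dots> = (\<Sum>i<n. if Suc i < n then 1 else 0) + (\<Sum>i<n. if 0 < i then 1 else (0::real))"
    unfolding frob_inner_outer by (simp add: mat_vec_sym_tridiag_toeplitz sum.distrib)
  also have "\<dots> = 2 * real (n - 1)"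
  proof (cases n)
    case (Suc m)
    have "(\<Sum>i<Suc m. if Suc i < Suc m then 1 else (0::real)) = real m"
      by (simp add: sum.lessThan_Suc)
    moreover have "(\<Sum>i<Suc m. if 0 < i then 1 else (0::real)) = real m"
      by (simp only: sum.lessThan_Suc_shift) simp
    ultimately show ?thesis using Suc by simp
  qed simp
  finally show ?thesis .
qed

lemma frob_inner_sym_tridiag_toeplitz:
  "frob_inner n (tridiag_toeplitz n s d s) (tridiag_toeplitz n s' d' s')
     = real n * d * d' + 2 * real (n - 1) * s * s'"
proof -
  let ?T = "tridiag_toeplitz n s d s"
    and ?I = "tridiag_toeplitz n 0 1 0" and ?E = "tridiag_toeplitz n 1 0 1"
  have "frob_inner n ?T ?I = real n * d"
    using frob_inner_sym_tridiag_toeplitz_right[of n ?I s d]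
    by (simp add: frob_inner_commute[of n ?T] frob_inner_identity_identity
        frob_inner_identity_offdiag)
  moreover have "frob_inner n ?T ?E = 2 * real (n - 1) * s"
    using frob_inner_sym_tridiag_toeplitz_right[of n ?E s d]
    by (simp add: frob_inner_commute[of n ?T] frob_inner_commute[of n ?E ?I]
        frob_inner_identity_offdiag frob_inner_offdiag_offdiag)
  ultimately show ?thesis
    by (simp add: frob_inner_sym_tridiag_toeplitz_right[of n ?T s' d'])
qed

lemma frob_norm_sym_tridiag_toeplitz:
  "frob_norm n (tridiag_toeplitz n s d s) = sqrt (real n * d\<^sup>2 + 2 * real (n - 1) * s\<^sup>2)"
  by (simp add: frob_norm_def frob_inner_sym_tridiag_toeplitz power2_eq_square mult.assoc)

lemma orth_proj_sym_tridiag_toeplitz: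
  fixes n :: nat and W :: "nat \<Rightarrow> nat \<Rightarrow> real"
  defines "a \<equiv> frob_inner n W (tridiag_toeplitz n 0 1 0) / real n"
    and "b \<equiv> frob_inner n W (tridiag_toeplitz n 1 0 1) / (2 * real (n - 1))"
  assumes "n \<ge> 2"
  shows "orth_proj n (sym_tridiag_toeplitz_space n) W = tridiag_toeplitz n b a b"
proof (rule orth_proj_eqI)
  show "tridiag_toeplitz n b a b \<in> sym_tridiag_toeplitz_space n"
    unfolding sym_tridiag_toeplitz_space_def by blast
next
  fix Y assume "Y \<in> sym_tridiag_toeplitz_space n"
  then obtain s d where Y: "Y = tridiag_toeplitz n s d s"
    unfolding sym_tridiag_toeplitz_space_def by blast
  have "frob_inner n W (tridiag_toeplitz n 0 1 0) = real n * a"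
    and "frob_inner n W (tridiag_toeplitz n 1 0 1) = 2 * real (n - 1) * b"
    using assms(3) by (simp_all add: a_def b_def)
  then show "frob_inner n (\<lambda>i j. W i j - tridiag_toeplitz n b a b i j) Y = 0"
    unfolding Y frob_inner_diff_left frob_inner_sym_tridiag_toeplitz
      frob_inner_sym_tridiag_toeplitz_right[of n W s d]
    by (simp only:) (simp add: algebra_simps)
next
  fix A B assume "A \<in> sym_tridiag_toeplitz_space n" "B \<in> sym_tridiag_toeplitz_space n"
  then obtain s d s' d' where "A = tridiag_toeplitz n s d s" "B = tridiag_toeplitz n s' d' s'"
    unfolding sym_tridiag_toeplitz_space_def by blast
  then have "(\<lambda>i j. A i j - B i j) = tridiag_toeplitz n (s - s') (d - d') (s - s')"
    by (simp add: tridiag_toeplitz_diff)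
  then show "(\<lambda>i j. A i j - B i j) \<in> sym_tridiag_toeplitz_space n"
    unfolding sym_tridiag_toeplitz_space_def by blast
next
  fix A assume "A \<in> sym_tridiag_toeplitz_space n" and A0: "frob_inner n A A = 0"
  then obtain s d where "A = tridiag_toeplitz n s d s"
    unfolding sym_tridiag_toeplitz_space_def by blast
  then have "A i j = 0" if "\<not> (i < n \<and> j < n)" for i j
    using that by (auto simp: tridiag_toeplitz_def)
  then show "A = (\<lambda>i j. 0)" using frob_inner_self_eq_0D[OF A0] by blast
qed

lemma orth_proj_outer_unit_eigenvector:
  assumes "n \<ge> 2" and unit: "(\<Sum>i<n. (x i)\<^sup>2) = 1"
    and eigen: "\<And>i. i < n \<Longrightarrow> mat_vec n (tridiag_toeplitz n 1 0 1) x i = \<mu> * x i"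
  shows "orth_proj n (sym_tridiag_toeplitz_space n) (outer x)
     = tridiag_toeplitz n (\<mu> / (2 * real (n - 1))) (1 / real n) (\<mu> / (2 * real (n - 1)))"
proof -
  have "frob_inner n (outer x) (tridiag_toeplitz n 0 1 0) = 1"
    using frob_inner_outer_eigenvector[of n _ x 1] unit by (simp add: mat_vec_sym_tridiag_toeplitz)
  moreover have "frob_inner n (outer x) (tridiag_toeplitz n 1 0 1) = \<mu>"
    using frob_inner_outer_eigenvector[of n _ x \<mu>] eigen unit by simp
  ultimately show ?thesis
    using orth_proj_sym_tridiag_toeplitz[OF assms(1), of "outer x"] by simp
qed

lemma mat_vec_sym_tridiag_toeplitz_three_term:
  assumes "g 0 = 0" and "g (Suc n) = 0"
    and "\<And>k. g k + g (Suc (Suc k)) = 2 * c * g (Suc k)"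
    and "i < n"
  shows "mat_vec n (tridiag_toeplitz n s d s) (\<lambda>k. g (Suc k)) i = (d + 2 * s * c) * g (Suc i)"
proof -
  have above: "(if Suc i < n then g (Suc (Suc i)) else 0) = g (Suc (Suc i))"
  proof (cases "Suc i < n")
    case False
    then have "Suc i = n" using assms(4) by simp
    then show ?thesis using assms(2) by simp
  qed simp
  have below: "(if 0 < i then g (Suc (i - 1)) else 0) = g i"
    using assms(1) by (cases i) auto
  have "mat_vec n (tridiag_toeplitz n s d s) (\<lambda>k. g (Suc k)) i
      = d * g (Suc i) + s * (g i + g (Suc (Suc i)))"
    using assms(4) by (simp add: mat_vec_sym_tridiag_toeplitz above below algebra_simps)
  also have "\<dots> = (d + 2 * s * c) * g (Suc i)"
    using assms(3)[of i] by (simp add: algebra_simps)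
  finally show ?thesis .
qed

lemma sin_three_term:
  "sin (real k * t) + sin (real (Suc (Suc k)) * t) = 2 * cos t * sin (real (Suc k) * t)"
proof -
  have "sin (real (Suc k) * t - t) + sin (real (Suc k) * t + t) = 2 * cos t * sin (real (Suc k) * t)"
    by (simp add: sin_add sin_diff)
  then show ?thesis by (simp add: algebra_simps)
qed

lemma sin_eigvec_eigenvector:
  assumes "i < n"
  shows "mat_vec n (tridiag_toeplitz n s d s) (sin_eigvec n h) i
     = (d + 2 * s * cos (real h * pi / real (n + 1))) * sin_eigvec n h i"
proof -
  define t where "t = real h * pi / real (n + 1)"
  define c where "c = vnorm n (\<lambda>k. sin (real h * real (k + 1) * pi / real (n + 1)))"
  define g where "g = (\<lambda>k. sin (real k * t) / c)"
  have x: "sin_eigvec n h = (\<lambda>k. g (Suc k))"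
    by (simp add: sin_eigvec_def g_def c_def t_def Let_def fun_eq_iff mult_ac)
  have "g (Suc n) = 0"
    using sin_npi[of h] by (simp add: g_def t_def)
  moreover have "g k + g (Suc (Suc k)) = 2 * cos t * g (Suc k)" for k
    using sin_three_term[of k t] by (simp add: g_def add_divide_distrib[symmetric])
  ultimately show ?thesis
    unfolding x t_def[symmetric]
    using mat_vec_sym_tridiag_toeplitz_three_term[of g, OF _ _ _ assms] by (simp add: g_def)
qed

lemma sum_squares_normalized:
  assumes "vnorm n v \<noteq> 0"
  shows "(\<Sum>k<n. (v k / vnorm n v)\<^sup>2) = 1"
proof -
  have "(\<Sum>k<n. (v k / vnorm n v)\<^sup>2) = (\<Sum>k<n. (v k)\<^sup>2) / (vnorm n v)\<^sup>2"
    by (simp add: power_divide sum_divide_distrib)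
  also have "(\<Sum>k<n. (v k)\<^sup>2) = (vnorm n v)\<^sup>2"
    unfolding vnorm_def by (simp add: sum_nonneg)
  finally show ?thesis
    using assms by simp
qed

lemma sin_eigvec_unit:
  assumes "1 \<le> h" and "h \<le> n"
  shows "(\<Sum>k<n. (sin_eigvec n h k)\<^sup>2) = 1"
proof -
  define v where "v = (\<lambda>k. sin (real h * real (k + 1) * pi / real (n + 1)))"
  have "real h * pi / real (n + 1) < pi"
    using assms by (simp add: divide_less_eq)
  then have "v 0 > 0"
    using assms by (simp add: v_def sin_gt_zero)
  then have "(\<Sum>k<n. (v k)\<^sup>2) > 0"
    using assms by (intro sum_pos2[where i = 0]) auto
  then have "vnorm n v \<noteq> 0"
    by (simp add: vnorm_def)
  then show ?thesis
    using sum_squares_normalized by (simp add: sin_eigvec_def v_def Let_def)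
qed

lemma struct_cond_ST_eq:
  assumes "n \<ge> 2" and "1 \<le> h" and "h \<le> n"
  shows "struct_cond_ST n h
     = sqrt (1 / real n + 2 / (real n - 1) * (cos (real h * pi / real (n + 1)))\<^sup>2)"
proof -
  define C where "C = cos (real h * pi / real (n + 1))"
  define x where "x = sin_eigvec n h"
  define m where "m = real (n - 1)"
  have unit: "(\<Sum>k<n. (x k)\<^sup>2) = 1"
    using sin_eigvec_unit assms(2,3) by (simp add: x_def)
  have eigen: "mat_vec n (tridiag_toeplitz n 1 0 1) x i = (2 * C) * x i" if "i < n" for i
    using sin_eigvec_eigenvector[OF that, of 1 0] by (simp add: x_def C_def)
  have "struct_cond_ST n h = frob_norm n (orth_proj n (sym_tridiag_toeplitz_space n) (outer x))"
    by (simp add: struct_cond_ST_def x_def[symmetric] eig_cond_unit[OF unit])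
  also have "\<dots> = sqrt (real n * (1 / real n)\<^sup>2 + 2 * m * (2 * C / (2 * m))\<^sup>2)"
    by (simp only: orth_proj_outer_unit_eigenvector[OF assms(1) unit eigen] m_def
        frob_norm_sym_tridiag_toeplitz)
  also have "\<dots> = sqrt (1 / real n + 2 / m * C\<^sup>2)"
  proof -
    have "real n \<noteq> 0" "m \<noteq> 0"
      using assms(1) by (auto simp: m_def)
    then show ?thesis by (simp add: field_simps power2_eq_square)
  qed
  finally show ?thesis
    using assms(1) by (simp add: m_def C_def of_nat_diff)
qed

theorem proposition14:
  fixes n :: nat and \<sigma> \<delta> :: real
  assumes "n \<ge> 2" and "\<sigma> \<noteq> 0"
  shows "\<forall>h \<in> {1..n}.
    (let T = tridiag_toeplitz n \<sigma> \<delta> \<sigma>;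
         lam = \<delta> + 2 * \<sigma> * cos (real h * pi / real (n + 1));
         x = sin_eigvec n h
     in (\<forall>i<n. mat_vec n T x i = lam * x i)
        \<and> struct_cond_ST n h
            = sqrt (1 / real n + 2 / (real n - 1) * (cos (real h * pi / real (n + 1)))\<^sup>2))"
  using sin_eigvec_eigenvector struct_cond_ST_eq[OF assms(1)] by (simp add: Let_def)

end
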